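(* Let $n\ge1$, let $G^\star=([n],E^\star)$ be a directed graph (directed cycles allowed), let $S_1=\operatorname{argmin}_{(\mathcal P,\pi)\in\mathcal S}|E^{(1)}_{(\mathcal P,\pi)}|$ and $S_2=\operatorname{argmin}_{(\mathcal P,\pi)\in S_1}|E^{(2)}_{(\mathcal P,\pi)}|$. Then (i) the partially ordered partition associated with $G^\star$ belongs to $S_2$, and (ii) for every $(\mathcal P,\pi)\in S_2$, $E^{(2)}_{(\mathcal P,\pi)}$ equals the set of unshielded conductors in $G^\star$.
   Context: $[n]=\{1,\dots,n\}$. The observed distribution is Markov and faithful to $G^\star$; for distinct $a,b$ and $Z\subseteq[n]\setminus\{a,b\}$, $a\perp\!\!\!\perp b\mid Z$ means $a$ and $b$ are $d$-separated given $Z$ in $G^\star$, and $a\not\perp\!\!\!\perp b\mid Z$ is its negation. In a directed graph, $a$ is an ancestor of $b$ if $a=b$ or there is a directed path from $a$ to $b$. Distinct $a,b$ are $p$-adjacent in a directed graph $G$ if there is an edge between them, or they have a common child which is an ancestor of $a$ or of $b$. A triple $(a,b,c)$ such that $a,c$ are not $p$-adjacent while $a,b$ and $c,b$ are $p$-adjacent is an unshielded conductor if $b$ is an ancestor of $a$ or of $c$, and an unshielded non-conductor otherwise. $\mathcal S$ is the set of pairs $(\mathcal P,\pi)$ with $\mathcal P$ a partition of $[n]$ and $\pi$ a partial order on $\mathcal P$; $C_1\le_\pi C_2$ iff $(C_1,C_2)\in\pi$; $C_{i,\mathcal P}$ is the block containing $i$; $C\le_\pi\max\{C_1,\dots,C_t\}$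 means $C\le_\pi C_i$ for some $i$. The strongly connected components of a directed graph $G$ are the classes of $i\sim j$ iff $i=j$ or there are directed paths $i\to j$ and $j\to i$; on them $C_1\le_G C_2$ iff $C_1=C_2$ or there is a directed path from a vertex of $C_1$ to a vertex of $C_2$. The partially ordered partition associated with $G$ is (its set of strongly connected components, $\le_G$). $E^{(1)}_{(\mathcal P,\pi)}=\{(a,b)\in[n]^2: a\ne b,\ a\not\perp\!\!\!\perp b\mid\bigcup\{C\in\mathcal P: C\le_\pi\max\{C_{a,\mathcal P},C_{b,\mathcal P}\}\}\setminus\{a,b\}\}$. $E^{(2)}_{(\mathcal P,\pi)}$ is the set of $(a,b,c)\in[n]^3$ with $a,b,c$ distinct, $(a,b),(c,b)\in E^{(1)}_{(\mathcal P,\pi)}$, $(a,c)\notin E^{(1)}_{(\mathcal P,\pi)}$ and $C_{b,\mathcal P}\le_\pi\max\{C_{a,\mathcal P},C_{c,\mathcal P}\}$. *)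

theory Defs
  imports Main "HOL-Library.Disjoint_Sets"
begin

(* Vertex set [n] = {1..n}; a directed graph is an edge set E \<subseteq> [n] \<times> [n]. *)

definition ancestor :: "(nat \<times> nat) set \<Rightarrow> nat \<Rightarrow> nat \<Rightarrow> bool" where
  "ancestor E a b \<longleftrightarrow> (a, b) \<in> E\<^sup>*"

(* A path between a and b: distinct vertices vs, with ds!i giving the orientation of the
   edge used between vs!i and vs!(i+1) (True: vs!i \<rightarrow> vs!(i+1), False: vs!(i+1) \<rightarrow> vs!i).
   It is d-connecting given Z if every collider is an ancestor of some element of Z and
   every non-collider (interior vertex) is not in Z. *)
definition d_connecting_path ::
  "(nat \<times> nat) set \<Rightarrow> nat \<Rightarrow> nat \<Rightarrow> nat set \<Rightarrow> nat list \<Rightarrow> bool list \<Rightarrow> bool" where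
  "d_connecting_path E a b Z vs ds \<longleftrightarrow>
     distinct vs \<and> 2 \<le> length vs \<and> hd vs = a \<and> last vs = b \<and>
     length ds = length vs - 1 \<and>
     (\<forall>i < length ds. if ds ! i then (vs ! i, vs ! Suc i) \<in> E else (vs ! Suc i, vs ! i) \<in> E) \<and>
     (\<forall>i. 0 < i \<and> i < length ds \<longrightarrow>
        (if ds ! (i - 1) \<and> \<not> ds ! i
         then (\<exists>z\<in>Z. ancestor E (vs ! i) z)
         else vs ! i \<notin> Z))"

definition d_separated :: "(nat \<times> nat) set \<Rightarrow> nat \<Rightarrow> nat \<Rightarrow> nat set \<Rightarrow> bool" where
  "d_separated E a b Z \<longleftrightarrow> \<not> (\<exists>vs ds. d_connecting_path E a b Z vs ds)"

definition p_adjacent :: "(nat \<times> nat) set \<Rightarrow> nat \<Rightarrow> nat \<Rightarrow> bool" where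
  "p_adjacent E a b \<longleftrightarrow> a \<noteq> b \<and>
     ((a, b) \<in> E \<or> (b, a) \<in> E \<or>
      (\<exists>c. (a, c) \<in> E \<and> (b, c) \<in> E \<and> (ancestor E c a \<or> ancestor E c b)))"

definition unshielded_conductors :: "nat \<Rightarrow> (nat \<times> nat) set \<Rightarrow> (nat \<times> nat \<times> nat) set" where
  "unshielded_conductors n E = {(a, b, c). a \<in> {1..n} \<and> b \<in> {1..n} \<and> c \<in> {1..n} \<and>
     distinct [a, b, c] \<and> \<not> p_adjacent E a c \<and> p_adjacent E a b \<and> p_adjacent E c b \<and>
     (ancestor E b a \<or> ancestor E b c)}"

definition POP :: "nat \<Rightarrow> (nat set set \<times> (nat set \<times> nat set) set) set" where
  "POP n = {(P, \<pi>). partition_on {1..n} P \<and> partial_order_on P \<pi>}"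

definition blk :: "nat set set \<Rightarrow> nat \<Rightarrow> nat set" where
  "blk P i = (THE C. C \<in> P \<and> i \<in> C)"

definition E1 :: "nat \<Rightarrow> (nat \<times> nat) set \<Rightarrow> nat set set \<times> (nat set \<times> nat set) set \<Rightarrow> (nat \<times> nat) set" where
  "E1 n E s = (case s of (P, \<pi>) \<Rightarrow>
     {(a, b). a \<in> {1..n} \<and> b \<in> {1..n} \<and> a \<noteq> b \<and>
       \<not> d_separated E a b
          (\<Union>{C \<in> P. (C, blk P a) \<in> \<pi> \<or> (C, blk P b) \<in> \<pi>} - {a, b})})"

definition E2 :: "nat \<Rightarrow> (nat \<times> nat) set \<Rightarrow> nat set set \<times> (nat set \<times> nat set) set \<Rightarrow> (nat \<times> nat \<times> nat) set" where
  "E2 n E s = (case s of (P, \<pi>) \<Rightarrow>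
     {(a, b, c). a \<in> {1..n} \<and> b \<in> {1..n} \<and> c \<in> {1..n} \<and> distinct [a, b, c] \<and>
       (a, b) \<in> E1 n E s \<and> (c, b) \<in> E1 n E s \<and> (a, c) \<notin> E1 n E s \<and>
       ((blk P b, blk P a) \<in> \<pi> \<or> (blk P b, blk P c) \<in> \<pi>)})"

definition S1 :: "nat \<Rightarrow> (nat \<times> nat) set \<Rightarrow> (nat set set \<times> (nat set \<times> nat set) set) set" where
  "S1 n E = {s \<in> POP n. \<forall>t \<in> POP n. card (E1 n E s) \<le> card (E1 n E t)}"

definition S2 :: "nat \<Rightarrow> (nat \<times> nat) set \<Rightarrow> (nat set set \<times> (nat set \<times> nat set) set) set" where
  "S2 n E = {s \<in> S1 n E. \<forall>t \<in> S1 n E. card (E2 n E s) \<le> card (E2 n E t)}"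

definition sccs :: "nat \<Rightarrow> (nat \<times> nat) set \<Rightarrow> nat set set" where
  "sccs n E = (\<lambda>i. {j \<in> {1..n}. (i, j) \<in> E\<^sup>* \<and> (j, i) \<in> E\<^sup>*}) ` {1..n}"

definition scc_order :: "nat \<Rightarrow> (nat \<times> nat) set \<Rightarrow> (nat set \<times> nat set) set" where
  "scc_order n E = {(C1, C2). C1 \<in> sccs n E \<and> C2 \<in> sccs n E \<and>
     (C1 = C2 \<or> (\<exists>u\<in>C1. \<exists>v\<in>C2. (u, v) \<in> E\<^sup>*))}"

definition assoc_pop :: "nat \<Rightarrow> (nat \<times> nat) set \<Rightarrow> nat set set \<times> (nat set \<times> nat set) set" where
  "assoc_pop n E = (sccs n E, scc_order n E)"

end

theory Submission
  imports Defs
begin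

text \<open>
  Every p-adjacent pair is d-connected given any set avoiding it (through an edge, a collider
  at a common child, or a directed path), so E1 of every partially ordered partition contains
  all p-adjacent pairs. For the partition into strongly connected components the conditioning
  set of a pair (a, b) is the set of ancestors of a and b; on a d-connecting path given such an
  ancestral set every interior vertex must be a collider, so the path has at most two edges and
  a, b are p-adjacent. Hence the components minimise the size of E1, and the minimisers are
  exactly those whose E1 is the set of p-adjacent pairs. For such a minimiser every unshielded
  conductor (a, b, c) lies in E2: otherwise b is outside the conditioning set of (a, c), and
  joining a to c through b yields a d-connecting walk, contradicting that a and c are not
  p-adjacent. Since E2 of the components is exactly the set of unshielded conductors, the
  components also minimise E2, and every minimiser has this E2.
\<close>

section \<open>d-connecting walks\<close>

text \<open>
  An interior vertex entered with orientation d and left with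
  orientation d' is a collider iff d \<and> \<not> d'; open_at is the d-connection condition there.
\<close>

definition oriented_edge :: "(nat \<times> nat) set \<Rightarrow> bool \<Rightarrow> nat \<Rightarrow> nat \<Rightarrow> bool" where
  "oriented_edge E d u v \<longleftrightarrow> (if d then (u, v) \<in> E else (v, u) \<in> E)"

definition open_at :: "(nat \<times> nat) set \<Rightarrow> nat set \<Rightarrow> nat \<Rightarrow> bool \<Rightarrow> bool \<Rightarrow> bool" where
  "open_at E Z v d d' \<longleftrightarrow> (if d \<and> \<not> d' then \<exists>z\<in>Z. ancestor E v z else v \<notin> Z)"

inductive d_connecting_walk :: "(nat \<times> nat) set \<Rightarrow> nat set \<Rightarrow> nat list \<Rightarrow> bool list \<Rightarrow> bool"
  for E Z where
  single: "oriented_edge E d u v \<Longrightarrow> d_connecting_walk E Z [u, v] [d]"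
| Cons: "d_connecting_walk E Z vs ds \<Longrightarrow> oriented_edge E d u (hd vs) \<Longrightarrow>
    open_at E Z (hd vs) d (hd ds) \<Longrightarrow> d_connecting_walk E Z (u # vs) (d # ds)"

lemma d_connecting_walk_nonempty:
  assumes "d_connecting_walk E Z vs ds"
  shows "vs \<noteq> []" "tl vs \<noteq> []" "ds \<noteq> []"
  using assms by (induction rule: d_connecting_walk.induct) auto

lemma d_connecting_walk_iff_nth:
  "d_connecting_walk E Z vs ds \<longleftrightarrow>
     2 \<le> length vs \<and> length ds = length vs - 1 \<and>
     (\<forall>i < length ds. oriented_edge E (ds ! i) (vs ! i) (vs ! Suc i)) \<and>
     (\<forall>i. 0 < i \<and> i < length ds \<longrightarrow> open_at E Z (vs ! i) (ds ! (i - 1)) (ds ! i))"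
  (is "?walk vs ds \<longleftrightarrow> ?nth vs ds")
proof
  show "?walk vs ds \<Longrightarrow> ?nth vs ds"
  proof (induction rule: d_connecting_walk.induct)
    case (Cons vs ds d u)
    have "vs \<noteq> []" "ds \<noteq> []"
      using d_connecting_walk_nonempty[OF Cons.hyps(1)] by auto
    then have "vs ! 0 = hd vs" "ds ! 0 = hd ds" by (simp_all add: hd_conv_nth)
    with Cons show ?case by (auto simp: nth_Cons' less_Suc_eq_0_disj)
  qed (auto simp: less_Suc_eq)
next
  show "?nth vs ds \<Longrightarrow> ?walk vs ds"
  proof (induction vs arbitrary: ds)
    case (Cons u vs)
    then obtain d ds' where ds: "ds = d # ds'" by (cases ds) auto
    show ?case
    proof (cases "length vs = 1")
      case True
      then obtain v where "vs = [v]" by (cases vs) auto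
      with Cons.prems show ?thesis unfolding ds by (auto intro: d_connecting_walk.single)
    next
      case False
      have "vs \<noteq> []" "ds' \<noteq> []"
        using Cons.prems False unfolding ds by auto
      then have hd: "vs ! 0 = hd vs" "ds' ! 0 = hd ds'" by (simp_all add: hd_conv_nth)
      have edges: "oriented_edge E (ds ! i) ((u # vs) ! i) ((u # vs) ! Suc i)" if "i < length ds" for i
        using Cons.prems that by blast
      have opens: "open_at E Z ((u # vs) ! i) (ds ! (i - 1)) (ds ! i)" if "0 < i" "i < length ds" for i
        using Cons.prems that by blast
      have "?nth vs ds'"
      proof (intro conjI allI impI)
        fix i assume "i < length ds'"
        then show "oriented_edge E (ds' ! i) (vs ! i) (vs ! Suc i)"
          using edges[of "Suc i"] unfolding ds by simp
      next
        fix i assume "0 < i \<and> i < length ds'"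
        then show "open_at E Z (vs ! i) (ds' ! (i - 1)) (ds' ! i)"
          using opens[of "Suc i"] unfolding ds by (simp add: nth_Cons')
      qed (use Cons.prems False ds in auto)
      moreover have "oriented_edge E d u (hd vs)"
        using edges[of 0] hd unfolding ds by simp
      moreover have "open_at E Z (hd vs) d (hd ds')"
        using opens[of 1] hd \<open>ds' \<noteq> []\<close> unfolding ds by simp
      ultimately show ?thesis
        unfolding ds using Cons.IH by (blast intro: d_connecting_walk.Cons)
    qed
  qed simp
qed

lemma d_connecting_path_iff_walk:
  "d_connecting_path E a b Z vs ds \<longleftrightarrow>
     distinct vs \<and> hd vs = a \<and> last vs = b \<and> d_connecting_walk E Z vs ds"
  unfolding d_connecting_path_def d_connecting_walk_iff_nth oriented_edge_def open_at_def
  by auto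

lemma oriented_edge_swap: "oriented_edge E (\<not> d) v u \<longleftrightarrow> oriented_edge E d u v"
  unfolding oriented_edge_def by simp

lemma open_at_swap: "open_at E Z v (\<not> d') (\<not> d) \<longleftrightarrow> open_at E Z v d d'"
  unfolding open_at_def by auto

lemma d_connecting_walk_append:
  assumes "d_connecting_walk E Z vs ds" "d_connecting_walk E Z ws es"
    and "last vs = hd ws" "open_at E Z (hd ws) (last ds) (hd es)"
  shows "d_connecting_walk E Z (vs @ tl ws) (ds @ es)"
  using assms
proof (induction rule: d_connecting_walk.induct)
  case (single d u v)
  have "ws \<noteq> []" using d_connecting_walk_nonempty[OF single.prems(1)] by auto
  then have "[u, v] @ tl ws = u # ws" using single.prems(2) by (cases ws) auto
  then show ?case using single by (auto intro: d_connecting_walk.Cons)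
next
  case (Cons vs ds d u)
  have "vs \<noteq> []" "ds \<noteq> []" using d_connecting_walk_nonempty[OF Cons.hyps(1)] by auto
  then show ?case using Cons by (auto intro!: d_connecting_walk.Cons)
qed

lemma d_connecting_walk_rev:
  "d_connecting_walk E Z vs ds \<Longrightarrow> d_connecting_walk E Z (rev vs) (map Not (rev ds))"
proof (induction rule: d_connecting_walk.induct)
  case (single d u v)
  then show ?case by (auto intro: d_connecting_walk.single simp: oriented_edge_swap)
next
  case (Cons vs ds d u)
  have "vs \<noteq> []" "ds \<noteq> []" using d_connecting_walk_nonempty[OF Cons.hyps(1)] by auto
  have "d_connecting_walk E Z [hd vs, u] [\<not> d]"
    using Cons.hyps(2) by (auto intro: d_connecting_walk.single simp: oriented_edge_swap)
  moreover have "open_at E Z (hd vs) (last (map Not (rev ds))) (\<not> d)"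
    using Cons.hyps(3) \<open>ds \<noteq> []\<close> open_at_swap by (simp add: last_map last_rev)
  moreover have "last (rev vs) = hd [hd vs, u]" using \<open>vs \<noteq> []\<close> by (simp add: last_rev)
  ultimately have "d_connecting_walk E Z (rev vs @ tl [hd vs, u]) (map Not (rev ds) @ [\<not> d])"
    by (intro d_connecting_walk_append[OF Cons.IH]) simp_all
  then show ?case by simp
qed

lemma d_connecting_walk_split:
  assumes "d_connecting_walk E Z (xs @ y # ys) ds" "xs \<noteq> []" "ys \<noteq> []"
  shows "\<exists>ds1 ds2. ds = ds1 @ ds2 \<and> d_connecting_walk E Z (xs @ [y]) ds1 \<and>
    d_connecting_walk E Z (y # ys) ds2 \<and> open_at E Z y (last ds1) (hd ds2)"
  using assms(2,1)
proof (induction xs arbitrary: ds rule: list_nonempty_induct)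
  case (single x)
  from single obtain d ds' where ds: "ds = d # ds'"
    and tail: "d_connecting_walk E Z (y # ys) ds'"
    and edge: "oriented_edge E d x y" and node: "open_at E Z y d (hd ds')"
    using \<open>ys \<noteq> []\<close> by (cases rule: d_connecting_walk.cases) auto
  have "d_connecting_walk E Z [x, y] [d]" using edge by (rule d_connecting_walk.single)
  then show ?case using ds tail node by (intro exI[of _ "[d]"] exI[of _ ds']) auto
next
  case (cons x xs)
  from cons.prems obtain d ds' where ds: "ds = d # ds'"
    and tail: "d_connecting_walk E Z (xs @ y # ys) ds'"
    and edge: "oriented_edge E d x (hd xs)" and node: "open_at E Z (hd xs) d (hd ds')"
    using \<open>xs \<noteq> []\<close> by (cases rule: d_connecting_walk.cases) (auto simp: append_eq_Cons_conv)
  obtain ds1 ds2 where split: "ds' = ds1 @ ds2" "d_connecting_walk E Z (xs @ [y]) ds1"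
    "d_connecting_walk E Z (y # ys) ds2" "open_at E Z y (last ds1) (hd ds2)"
    using cons.IH[OF tail] by blast
  have "ds1 \<noteq> []" using d_connecting_walk_nonempty[OF split(2)] by auto
  then have "d_connecting_walk E Z ((x # xs) @ [y]) (d # ds1)"
    using split edge node \<open>xs \<noteq> []\<close> by (auto intro: d_connecting_walk.Cons)
  then show ?case using split \<open>ds1 \<noteq> []\<close> ds by (intro exI[of _ "d # ds1"] exI[of _ ds2]) auto
qed

lemma d_connecting_walk_forward_head:
  assumes "d_connecting_walk E Z vs ds" "hd ds" "\<forall>z\<in>Z. \<not> ancestor E (hd vs) z"
  shows "last ds \<and> ancestor E (hd vs) (last vs)"
  using assms
proof (induction rule: d_connecting_walk.induct)
  case (single d u v)
  then show ?case by (simp add: oriented_edge_def ancestor_def)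
next
  case (Cons vs ds d u)
  have "vs \<noteq> []" "ds \<noteq> []" using d_connecting_walk_nonempty[OF Cons.hyps(1)] by auto
  have uv: "(u, hd vs) \<in> E" using Cons.hyps(2) Cons.prems(1) by (simp add: oriented_edge_def)
  then have "\<forall>z\<in>Z. \<not> ancestor E (hd vs) z"
    using Cons.prems(2) unfolding ancestor_def by (auto intro: converse_rtrancl_into_rtrancl)
  moreover have "hd ds"
    using Cons.hyps(3) Cons.prems(1) calculation unfolding open_at_def by (auto split: if_splits)
  ultimately show ?case
    using Cons.IH uv \<open>vs \<noteq> []\<close> \<open>ds \<noteq> []\<close> unfolding ancestor_def
    by (auto intro: converse_rtrancl_into_rtrancl)
qed

lemma d_connecting_walk_of_trancl:
  assumes "(u, v) \<in> E\<^sup>+" "\<forall>z\<in>Z. \<not> ancestor E u z"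
  shows "\<exists>vs ds. d_connecting_walk E Z vs ds \<and> hd vs = u \<and> last vs = v \<and> hd ds"
  using assms
proof (induction rule: converse_trancl_induct)
  case (base u)
  then have "d_connecting_walk E Z [u, v] [True]"
    by (auto intro: d_connecting_walk.single simp: oriented_edge_def)
  then show ?case by fastforce
next
  case (step u w)
  have "\<forall>z\<in>Z. \<not> ancestor E w z"
    using step.prems step.hyps(1) unfolding ancestor_def by (auto intro: converse_rtrancl_into_rtrancl)
  then obtain vs ds where walk: "d_connecting_walk E Z vs ds" "hd vs = w" "last vs = v" "hd ds"
    using step.IH by blast
  have "w \<notin> Z" using \<open>\<forall>z\<in>Z. \<not> ancestor E w z\<close> unfolding ancestor_def by auto
  then have "d_connecting_walk E Z (u # vs) (True # ds)"
    using walk step.hyps(1) by (auto intro: d_connecting_walk.Cons simp: oriented_edge_def open_at_def)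
  moreover have "vs \<noteq> []" using d_connecting_walk_nonempty[OF walk(1)] by auto
  ultimately show ?case using walk by fastforce
qed

lemma open_at_bypass:
  assumes "open_at E Z y d e" "open_at E Z y e' d'" "e \<and> \<not> e' \<Longrightarrow> \<exists>z\<in>Z. ancestor E y z"
  shows "open_at E Z y d d'"
  using assms unfolding open_at_def by (auto split: if_splits)

lemma d_connecting_walk_remove_loop:
  assumes walk: "d_connecting_walk E Z (xs @ [y] @ ys @ [y] @ zs) ds" and "xs \<noteq> [] \<or> zs \<noteq> []"
  shows "\<exists>ds'. d_connecting_walk E Z (xs @ y # zs) ds'"
proof -
  consider "xs = []" | "zs = []" | "xs \<noteq> []" "zs \<noteq> []" by blast
  then show ?thesis
  proof cases
    case 1
    then have "d_connecting_walk E Z ((y # ys) @ y # zs) ds" "zs \<noteq> []"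
      using assms by simp_all
    then show ?thesis using d_connecting_walk_split[of E Z "y # ys" y zs ds] 1 by auto
  next
    case 2
    then have "d_connecting_walk E Z (xs @ y # ys @ [y]) ds" "xs \<noteq> []"
      using assms by simp_all
    then show ?thesis using d_connecting_walk_split[of E Z xs y "ys @ [y]" ds] 2 by auto
  next
    case 3
    have "d_connecting_walk E Z (xs @ y # (ys @ y # zs)) ds" using walk by simp
    then obtain dp dr where prefix: "d_connecting_walk E Z (xs @ [y]) dp"
      and rest: "d_connecting_walk E Z ((y # ys) @ y # zs) dr"
      and junction: "open_at E Z y (last dp) (hd dr)"
      using d_connecting_walk_split[of E Z xs y "ys @ y # zs" ds] 3 by auto
    then obtain dm ds' where "dr = dm @ ds'" and loop: "d_connecting_walk E Z (y # ys @ [y]) dm"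
      and suffix: "d_connecting_walk E Z (y # zs) ds'" and "open_at E Z y (last dm) (hd ds')"
      using d_connecting_walk_split[OF rest] 3 by auto
    moreover have "dm \<noteq> []" using d_connecting_walk_nonempty[OF loop] by auto
    ultimately have "open_at E Z y (last dp) (hd dm)" "open_at E Z y (last dm) (hd ds')"
      using junction by simp_all
    \<comment> \<open>a loop leaving y by outgoing edges at both ends passes a collider below y\<close>
    moreover have "hd dm \<and> \<not> last dm \<Longrightarrow> \<exists>z\<in>Z. ancestor E y z"
      using d_connecting_walk_forward_head[OF loop] by auto
    ultimately have "open_at E Z y (last dp) (hd ds')" by (rule open_at_bypass)
    then have "d_connecting_walk E Z ((xs @ [y]) @ tl (y # zs)) (dp @ ds')"
      using d_connecting_walk_append[OF prefix suffix] by simp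
    then show ?thesis by auto
  qed
qed

lemma d_connecting_walk_imp_not_d_separated:
  assumes "d_connecting_walk E Z vs ds" "hd vs \<noteq> last vs"
  shows "\<not> d_separated E (hd vs) (last vs) Z"
  using assms
proof (induction "length vs" arbitrary: vs ds rule: less_induct)
  case less
  show ?case
  proof (cases "distinct vs")
    case True
    then show ?thesis using less.prems d_connecting_path_iff_walk unfolding d_separated_def by blast
  next
    case False
    then obtain xs y ys zs where vs: "vs = xs @ [y] @ ys @ [y] @ zs"
      using not_distinct_decomp by blast
    then have "xs \<noteq> [] \<or> zs \<noteq> []" using less.prems(2) by auto
    then obtain ds' where "d_connecting_walk E Z (xs @ y # zs) ds'"
      using d_connecting_walk_remove_loop less.prems(1) vs by blast
    moreover have "length (xs @ y # zs) < length vs"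
      and "hd (xs @ y # zs) = hd vs" "last (xs @ y # zs) = last vs"
      using vs by (simp_all add: hd_append last_append)
    ultimately show ?thesis using less.hyps less.prems(2) by metis
  qed
qed

section \<open>p-adjacency and d-connection\<close>

lemma p_adjacent_imp_neq: "p_adjacent E a b \<Longrightarrow> a \<noteq> b"
  unfolding p_adjacent_def by simp

lemma d_connecting_walk_via_directed_path:
  assumes "(x, d) \<in> E" "ancestor E d b" "\<forall>z\<in>Z. \<not> ancestor E d z"
  shows "\<exists>vs ds. d_connecting_walk E Z vs ds \<and> hd vs = x \<and> last vs = b"
proof (cases "d = b")
  case True
  then have "d_connecting_walk E Z [x, b] [True]"
    using assms(1) by (auto intro: d_connecting_walk.single simp: oriented_edge_def)
  then show ?thesis by fastforce
next
  case False
  then have "(d, b) \<in> E\<^sup>+" using assms(2) unfolding ancestor_def by (simp add: rtrancl_eq_or_trancl)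
  then obtain vs ds where walk: "d_connecting_walk E Z vs ds" "hd vs = d" "last vs = b" "hd ds"
    using d_connecting_walk_of_trancl assms(3) by blast
  have "d \<notin> Z" using assms(3) unfolding ancestor_def by auto
  then have "d_connecting_walk E Z (x # vs) (True # ds)"
    using walk assms(1) by (auto intro: d_connecting_walk.Cons simp: oriented_edge_def open_at_def)
  moreover have "vs \<noteq> []" using d_connecting_walk_nonempty[OF walk(1)] by auto
  ultimately show ?thesis using walk by fastforce
qed

lemma p_adjacent_imp_d_connecting_walk:
  assumes "p_adjacent E x b"
  shows "\<exists>vs ds. d_connecting_walk E Z vs ds \<and> hd vs = x \<and> last vs = b"
proof -
  consider "(x, b) \<in> E" | "(b, x) \<in> E"
    | d where "(x, d) \<in> E" "(b, d) \<in> E" "ancestor E d x \<or> ancestor E d b"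
    using assms unfolding p_adjacent_def by blast
  then show ?thesis
  proof cases
    case 1
    then have "d_connecting_walk E Z [x, b] [True]"
      by (auto intro: d_connecting_walk.single simp: oriented_edge_def)
    then show ?thesis by fastforce
  next
    case 2
    then have "d_connecting_walk E Z [x, b] [False]"
      by (auto intro: d_connecting_walk.single simp: oriented_edge_def)
    then show ?thesis by fastforce
  next
    case (3 d)
    consider "\<exists>z\<in>Z. ancestor E d z" | "\<forall>z\<in>Z. \<not> ancestor E d z" "ancestor E d b"
      | "\<forall>z\<in>Z. \<not> ancestor E d z" "ancestor E d x"
      using 3(3) by blast
    then show ?thesis
    proof cases
      case 1
      have "d_connecting_walk E Z [d, b] [False]"
        using 3(2) by (auto intro: d_connecting_walk.single simp: oriented_edge_def)
      then have "d_connecting_walk E Z (x # [d, b]) (True # [False])"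
        by (rule d_connecting_walk.Cons) (use 1 3(1) in \<open>auto simp: oriented_edge_def open_at_def\<close>)
      then show ?thesis by fastforce
    next
      case 2
      then show ?thesis using d_connecting_walk_via_directed_path 3(1) by blast
    next
      case 3
      then obtain vs ds where "d_connecting_walk E Z vs ds" "hd vs = b" "last vs = x"
        using d_connecting_walk_via_directed_path \<open>(b, d) \<in> E\<close> by blast
      then show ?thesis using d_connecting_walk_rev by (metis hd_rev last_rev)
    qed
  qed
qed

lemma p_adjacent_imp_not_d_separated: "p_adjacent E a b \<Longrightarrow> \<not> d_separated E a b Z"
  using p_adjacent_imp_d_connecting_walk d_connecting_walk_imp_not_d_separated p_adjacent_imp_neq
  by metis

lemma unshielded_conductor_walk:
  assumes "p_adjacent E a b" "p_adjacent E c b" "ancestor E b a" "b \<notin> Z"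
  shows "\<exists>vs ds. d_connecting_walk E Z vs ds \<and> hd vs = a \<and> last vs = c"
proof -
  obtain ws es where "d_connecting_walk E Z ws es" "hd ws = c" "last ws = b"
    using p_adjacent_imp_d_connecting_walk assms(2) by blast
  moreover have "es \<noteq> []" using d_connecting_walk_nonempty[OF calculation(1)] by auto
  ultimately have from_b: "d_connecting_walk E Z (rev ws) (map Not (rev es))"
    "hd (rev ws) = b" "last (rev ws) = c" "hd (map Not (rev es)) = (\<not> last es)"
    using d_connecting_walk_rev by (auto simp: hd_rev last_rev hd_map)
  have to_b: "\<exists>vs ds. d_connecting_walk E Z vs ds \<and> hd vs = a \<and> last vs = b \<and>
      open_at E Z b (last ds) (\<not> last es)"
  proof (cases "\<exists>z\<in>Z. ancestor E b z")
    case True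
    obtain vs ds where "d_connecting_walk E Z vs ds" "hd vs = a" "last vs = b"
      using p_adjacent_imp_d_connecting_walk assms(1) by blast
    then show ?thesis using True assms(4) unfolding open_at_def by auto
  next
    case False
    \<comment> \<open>reach b backwards along the directed path b to a, so that b is no collider\<close>
    have "(b, a) \<in> E\<^sup>+"
      using assms(1,3) unfolding p_adjacent_def ancestor_def by (auto simp: rtrancl_eq_or_trancl)
    then obtain vs ds where "d_connecting_walk E Z vs ds" "hd vs = b" "last vs = a" "hd ds"
      using d_connecting_walk_of_trancl False by blast
    moreover have "ds \<noteq> []" using d_connecting_walk_nonempty[OF calculation(1)] by auto
    ultimately have "d_connecting_walk E Z (rev vs) (map Not (rev ds))"
      "hd (rev vs) = a" "last (rev vs) = b" "\<not> last (map Not (rev ds))"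
      using d_connecting_walk_rev by (auto simp: hd_rev last_rev last_map)
    then show ?thesis using assms(4) unfolding open_at_def by auto
  qed
  then obtain vs ds where "d_connecting_walk E Z vs ds" "hd vs = a" "last vs = b"
    "open_at E Z b (last ds) (\<not> last es)"
    by blast
  then have "d_connecting_walk E Z (vs @ tl (rev ws)) (ds @ map Not (rev es))"
    by (intro d_connecting_walk_append[OF _ from_b(1)]) (simp_all add: from_b)
  moreover have "hd (vs @ tl (rev ws)) = a" "last (vs @ tl (rev ws)) = c"
    using from_b d_connecting_walk_nonempty[OF from_b(1)]
      d_connecting_walk_nonempty[OF \<open>d_connecting_walk E Z vs ds\<close>] \<open>hd vs = a\<close>
    by (simp_all add: last_tl)
  ultimately show ?thesis by blast
qed

lemma unshielded_conductor_not_d_separated: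
  assumes "p_adjacent E a b" "p_adjacent E c b" "ancestor E b a \<or> ancestor E b c"
    and "b \<notin> Z" "a \<noteq> c"
  shows "\<not> d_separated E a c Z"
proof -
  have "\<exists>vs ds. d_connecting_walk E Z vs ds \<and> hd vs = a \<and> last vs = c"
  proof (cases "ancestor E b a")
    case True
    then show ?thesis using unshielded_conductor_walk assms(1,2,4) by blast
  next
    case False
    then obtain vs ds where "d_connecting_walk E Z vs ds" "hd vs = c" "last vs = a"
      using unshielded_conductor_walk assms by blast
    then show ?thesis using d_connecting_walk_rev by (metis hd_rev last_rev)
  qed
  then show ?thesis using d_connecting_walk_imp_not_d_separated assms(5) by blast
qed

lemma d_connecting_walk_vertices:
  "d_connecting_walk E Z vs ds \<Longrightarrow> E \<subseteq> V \<times> V \<Longrightarrow> set vs \<subseteq> V"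
  by (induction rule: d_connecting_walk.induct) (auto simp: oriented_edge_def split: if_splits)

lemma distinct_hd_neq_last: "distinct xs \<Longrightarrow> tl xs \<noteq> [] \<Longrightarrow> hd xs \<noteq> last xs"
  by (cases xs) auto

lemma d_connecting_walk_Cons_hd_ancestor:
  assumes "d_connecting_walk E Z vs ds" "oriented_edge E d u (hd vs)" "open_at E Z (hd vs) d (hd ds)"
  shows "ancestor E (hd vs) u \<or> ancestor E (hd vs) (last vs) \<or> (\<exists>z\<in>Z. ancestor E (hd vs) z)"
proof -
  consider "\<not> d" | "hd ds" | "d" "\<not> hd ds" by blast
  then show ?thesis
  proof cases
    case 1
    then show ?thesis using assms(2) unfolding oriented_edge_def ancestor_def by auto
  next
    case 2
    then show ?thesis using d_connecting_walk_forward_head[OF assms(1)] by blast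
  next
    case 3
    then show ?thesis using assms(3) unfolding open_at_def by simp
  qed
qed

lemma d_connecting_path_given_ancestors_imp_p_adjacent:
  assumes path: "d_connecting_path E a b Z vs ds" and "E \<subseteq> V \<times> V"
    and Z: "Z = {v \<in> V. ancestor E v a \<or> ancestor E v b} - {a, b}"
  shows "p_adjacent E a b"
proof -
  \<comment> \<open>interior vertices are ancestors of a, b or Z, hence in Z, hence colliders\<close>
  define An where "An v \<longleftrightarrow> ancestor E v a \<or> ancestor E v b" for v
  have walk: "d_connecting_walk E Z vs ds" and "distinct vs" "hd vs = a" "last vs = b"
    using path d_connecting_path_iff_walk by blast+
  then have "a \<noteq> b" using distinct_hd_neq_last d_connecting_walk_nonempty(2)[OF walk] by metis
  have An_edge: "An u" if "(u, v) \<in> E" "An v" for u v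
    using that unfolding An_def ancestor_def by (meson converse_rtrancl_into_rtrancl)
  have An_Z: "An v" if "ancestor E v z" "z \<in> Z" for v z
    using that unfolding Z An_def ancestor_def by (auto intro: rtrancl_trans)
  have in_Z: "v \<in> Z" if "v \<in> set vs" "v \<noteq> a" "v \<noteq> b" "An v" for v
    using that d_connecting_walk_vertices[OF walk \<open>E \<subseteq> V \<times> V\<close>] unfolding Z An_def by auto
  from walk show ?thesis
  proof cases
    case (single d)
    then show ?thesis using \<open>distinct vs\<close> \<open>hd vs = a\<close> \<open>last vs = b\<close>
      unfolding p_adjacent_def oriented_edge_def by (auto split: if_splits)
  next
    case (Cons vs' ds' d u)
    define v where "v = hd vs'"
    have vs': "u = a" "distinct vs'" "a \<notin> set vs'" "last vs' = b" "tl vs' \<noteq> []"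
      using Cons \<open>distinct vs\<close> \<open>hd vs = a\<close> \<open>last vs = b\<close>
        d_connecting_walk_nonempty[OF Cons(3)]
      by auto
    have "An v"
      using d_connecting_walk_Cons_hd_ancestor[OF Cons(3-5)] An_Z vs' unfolding v_def An_def by blast
    moreover have "v \<in> set vs" "v \<noteq> a" "v \<noteq> b"
      using vs' distinct_hd_neq_last[of vs'] Cons(1) d_connecting_walk_nonempty[OF Cons(3)]
      unfolding v_def by auto
    ultimately have collider: "d \<and> \<not> hd ds'"
      using in_Z Cons(5) unfolding v_def open_at_def by (auto split: if_splits)
    then have "(a, v) \<in> E" using Cons(4) vs'(1) unfolding v_def oriented_edge_def by simp
    from Cons(3) show ?thesis
    proof cases
      case (single e)
      then show ?thesis using \<open>(a, v) \<in> E\<close> \<open>An v\<close> \<open>a \<noteq> b\<close> collider vs'(4)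
        unfolding p_adjacent_def oriented_edge_def An_def v_def by auto
    next
      case (Cons vs'' ds'' e w')
      define w where "w = hd vs''"
      have "(w, v) \<in> E" "w \<notin> Z"
        using Cons collider unfolding w_def v_def oriented_edge_def open_at_def by auto
      moreover have "w \<in> set vs" "w \<noteq> a" "w \<noteq> b"
        using Cons vs' \<open>vs = u # vs'\<close> distinct_hd_neq_last[of vs'']
          d_connecting_walk_nonempty[OF Cons(3)]
        unfolding w_def by (auto simp: hd_in_set)
      ultimately show ?thesis using in_Z An_edge \<open>An v\<close> by blast
    qed
  qed
qed

section \<open>Strongly connected components\<close>

lemma blk_eq:
  assumes "partition_on A P" "C \<in> P" "i \<in> C"
  shows "blk P i = C"
  unfolding blk_def
proof (rule the_equality)
  show "C \<in> P \<and> i \<in> C" using assms(2,3) by blast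
  show "C' = C" if "C' \<in> P \<and> i \<in> C'" for C'
    using that assms partition_onD2[OF assms(1)] unfolding disjoint_def by blast
qed

lemma blk_mem:
  assumes "partition_on A P" "i \<in> A"
  shows "blk P i \<in> P" "i \<in> blk P i"
proof -
  obtain C where "C \<in> P" "i \<in> C" using assms partition_onD1 by blast
  then show "blk P i \<in> P" "i \<in> blk P i" using blk_eq[OF assms(1)] by simp_all
qed

lemma mem_Union_blocks_iff:
  assumes "partition_on A P"
  shows "v \<in> \<Union>{C \<in> P. Q C} \<longleftrightarrow> v \<in> A \<and> Q (blk P v)"
proof
  assume "v \<in> \<Union>{C \<in> P. Q C}"
  then obtain C where "C \<in> P" "Q C" "v \<in> C" by blast
  then show "v \<in> A \<and> Q (blk P v)" using blk_eq[OF assms] partition_onD1[OF assms] by auto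
next
  assume "v \<in> A \<and> Q (blk P v)"
  then show "v \<in> \<Union>{C \<in> P. Q C}" using blk_mem[OF assms] by blast
qed

definition mutually_reachable :: "nat \<Rightarrow> (nat \<times> nat) set \<Rightarrow> (nat \<times> nat) set" where
  "mutually_reachable n E = {(i, j). i \<in> {1..n} \<and> j \<in> {1..n} \<and> (i, j) \<in> E\<^sup>* \<and> (j, i) \<in> E\<^sup>*}"

lemma equiv_mutually_reachable: "equiv {1..n} (mutually_reachable n E)"
proof (rule equivI)
  show "trans (mutually_reachable n E)"
    unfolding mutually_reachable_def trans_def by (blast intro: rtrancl_trans)
qed (auto simp: mutually_reachable_def refl_on_def sym_def)

lemma sccs_eq_quotient: "sccs n E = {1..n} // mutually_reachable n E"
  unfolding sccs_def quotient_def mutually_reachable_def by auto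

lemma partition_on_sccs: "partition_on {1..n} (sccs n E)"
  unfolding sccs_eq_quotient by (rule partition_on_quotient[OF equiv_mutually_reachable])

lemma blk_sccs:
  assumes "i \<in> {1..n}"
  shows "blk (sccs n E) i = mutually_reachable n E `` {i}"
  using blk_eq[OF partition_on_sccs] quotientI[OF assms]
    equiv_class_self[OF equiv_mutually_reachable assms]
  unfolding sccs_eq_quotient by blast

lemma scc_order_classes_iff:
  assumes "x \<in> {1..n}" "y \<in> {1..n}"
  shows "(mutually_reachable n E `` {x}, mutually_reachable n E `` {y}) \<in> scc_order n E
    \<longleftrightarrow> (x, y) \<in> E\<^sup>*"
proof
  let ?R = "mutually_reachable n E"
  assume "(?R `` {x}, ?R `` {y}) \<in> scc_order n E"
  then consider "?R `` {x} = ?R `` {y}" | u v where "(x, u) \<in> ?R" "(y, v) \<in> ?R" "(u, v) \<in> E\<^sup>*"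
    unfolding scc_order_def by blast
  then show "(x, y) \<in> E\<^sup>*"
  proof cases
    case 1
    then show ?thesis using eq_equiv_class_iff[OF equiv_mutually_reachable assms]
      unfolding mutually_reachable_def by blast
  next
    case 2
    then have "(x, u) \<in> E\<^sup>*" "(v, y) \<in> E\<^sup>*" unfolding mutually_reachable_def by auto
    with \<open>(u, v) \<in> E\<^sup>*\<close> show ?thesis by (meson rtrancl_trans)
  qed
next
  assume "(x, y) \<in> E\<^sup>*"
  then show "(mutually_reachable n E `` {x}, mutually_reachable n E `` {y}) \<in> scc_order n E"
    using assms quotientI[of _ "{1..n}" "mutually_reachable n E"]
      equiv_class_self[OF equiv_mutually_reachable]
    unfolding scc_order_def sccs_eq_quotient by blast
qed

lemma scc_order_blk_iff:
  assumes "x \<in> {1..n}" "y \<in> {1..n}"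
  shows "(blk (sccs n E) x, blk (sccs n E) y) \<in> scc_order n E \<longleftrightarrow> ancestor E x y"
  unfolding blk_sccs[OF assms(1)] blk_sccs[OF assms(2)] scc_order_classes_iff[OF assms]
    ancestor_def ..

lemma partial_order_on_scc_order: "partial_order_on (sccs n E) (scc_order n E)"
  unfolding partial_order_on_def preorder_on_def
proof (intro conjI)
  let ?R = "mutually_reachable n E"
  show field: "scc_order n E \<subseteq> sccs n E \<times> sccs n E"
    unfolding scc_order_def by auto
  show "refl_on (sccs n E) (scc_order n E)"
    unfolding scc_order_def refl_on_def by auto
  have class_of: "\<exists>x\<in>{1..n}. C = ?R `` {x}" if "(C, C') \<in> scc_order n E \<or> (C', C) \<in> scc_order n E"
    for C C'
    using that field unfolding sccs_eq_quotient quotient_def by auto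
  have order_iff: "(?R `` {x}, ?R `` {y}) \<in> scc_order n E \<longleftrightarrow> (x, y) \<in> E\<^sup>*"
    if "x \<in> {1..n}" "y \<in> {1..n}" for x y
    using scc_order_classes_iff[OF that] .
  show "trans (scc_order n E)"
  proof (rule transI)
    fix C1 C2 C3 assume C12: "(C1, C2) \<in> scc_order n E" and C23: "(C2, C3) \<in> scc_order n E"
    obtain x y z where xyz: "x \<in> {1..n}" "y \<in> {1..n}" "z \<in> {1..n}"
      and C: "C1 = ?R `` {x}" "C2 = ?R `` {y}" "C3 = ?R `` {z}"
      using class_of C12 C23 by metis
    have "(x, y) \<in> E\<^sup>*" "(y, z) \<in> E\<^sup>*"
      using C12 C23 order_iff xyz unfolding C by blast+
    then show "(C1, C3) \<in> scc_order n E"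
      using order_iff xyz unfolding C by (meson rtrancl_trans)
  qed
  show "antisym (scc_order n E)"
  proof (rule antisymI)
    fix C1 C2 assume C12: "(C1, C2) \<in> scc_order n E" and C21: "(C2, C1) \<in> scc_order n E"
    obtain x y where xy: "x \<in> {1..n}" "y \<in> {1..n}" and C: "C1 = ?R `` {x}" "C2 = ?R `` {y}"
      using class_of C12 by metis
    have "(x, y) \<in> E\<^sup>*" "(y, x) \<in> E\<^sup>*"
      using C12 C21 order_iff xy unfolding C by blast+
    then have "(x, y) \<in> ?R" using xy unfolding mutually_reachable_def by simp
    then show "C1 = C2"
      using C equiv_class_eq_iff[OF equiv_mutually_reachable] by blast
  qed
qed

lemma assoc_pop_in_POP: "assoc_pop n E \<in> POP n"
  unfolding assoc_pop_def POP_def using partition_on_sccs partial_order_on_scc_order by simp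

lemma assoc_pop_conditioning_set:
  assumes "a \<in> {1..n}" "b \<in> {1..n}"
  shows "\<Union>{C \<in> sccs n E. (C, blk (sccs n E) a) \<in> scc_order n E \<or>
      (C, blk (sccs n E) b) \<in> scc_order n E}
    = {v \<in> {1..n}. ancestor E v a \<or> ancestor E v b}"
  by (rule set_eqI, subst mem_Union_blocks_iff[OF partition_on_sccs]) (use scc_order_blk_iff assms in blast)

section \<open>Minimising the edge counts\<close>

definition p_adjacent_pairs :: "nat \<Rightarrow> (nat \<times> nat) set \<Rightarrow> (nat \<times> nat) set" where
  "p_adjacent_pairs n E = {(a, b). a \<in> {1..n} \<and> b \<in> {1..n} \<and> p_adjacent E a b}"

lemma p_adjacent_pairs_subset_E1: "p_adjacent_pairs n E \<subseteq> E1 n E s"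
  using p_adjacent_imp_not_d_separated unfolding p_adjacent_pairs_def E1_def
  by (cases s) (auto dest: p_adjacent_imp_neq)

lemma E1_assoc_pop:
  assumes "E \<subseteq> {1..n} \<times> {1..n}"
  shows "E1 n E (assoc_pop n E) = p_adjacent_pairs n E"
proof
  show "E1 n E (assoc_pop n E) \<subseteq> p_adjacent_pairs n E"
  proof clarify
    fix a b assume "(a, b) \<in> E1 n E (assoc_pop n E)"
    then have ab: "a \<in> {1..n}" "b \<in> {1..n}"
      and "\<not> d_separated E a b ({v \<in> {1..n}. ancestor E v a \<or> ancestor E v b} - {a, b})"
      unfolding E1_def assoc_pop_def by (auto simp: assoc_pop_conditioning_set)
    then obtain vs ds
      where "d_connecting_path E a b ({v \<in> {1..n}. ancestor E v a \<or> ancestor E v b} - {a, b}) vs ds"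
      unfolding d_separated_def by blast
    then have "p_adjacent E a b"
      using d_connecting_path_given_ancestors_imp_p_adjacent assms by blast
    then show "(a, b) \<in> p_adjacent_pairs n E" unfolding p_adjacent_pairs_def using ab by simp
  qed
qed (rule p_adjacent_pairs_subset_E1)

lemma E2_assoc_pop:
  assumes "E \<subseteq> {1..n} \<times> {1..n}"
  shows "E2 n E (assoc_pop n E) = unshielded_conductors n E"
  unfolding E2_def E1_assoc_pop[OF assms]
  by (auto simp: assoc_pop_def p_adjacent_pairs_def unshielded_conductors_def scc_order_blk_iff)

lemma unshielded_conductors_subset_E2:
  assumes "s \<in> POP n" "E1 n E s = p_adjacent_pairs n E"
  shows "unshielded_conductors n E \<subseteq> E2 n E s"
proof clarify
  fix a b c assume "(a, b, c) \<in> unshielded_conductors n E"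
  then have abc: "a \<in> {1..n}" "b \<in> {1..n}" "c \<in> {1..n}" "distinct [a, b, c]"
    and adj: "p_adjacent E a b" "p_adjacent E c b" "\<not> p_adjacent E a c"
    and anc: "ancestor E b a \<or> ancestor E b c"
    unfolding unshielded_conductors_def by auto
  obtain P \<pi> where s: "s = (P, \<pi>)" by fastforce
  have "(blk P b, blk P a) \<in> \<pi> \<or> (blk P b, blk P c) \<in> \<pi>"
  proof (rule ccontr)
    assume b_not_below: "\<not> ?thesis"
    define Z where "Z = \<Union>{C \<in> P. (C, blk P a) \<in> \<pi> \<or> (C, blk P c) \<in> \<pi>} - {a, c}"
    have "partition_on {1..n} P" using assms(1) unfolding s POP_def by simp
    then have "b \<notin> Z" using b_not_below blk_eq unfolding Z_def by blast
    then have "\<not> d_separated E a c Z"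
      using unshielded_conductor_not_d_separated adj anc abc(4) by simp
    then have "(a, c) \<in> E1 n E s" unfolding E1_def s Z_def using abc by simp
    then show False using assms(2) adj(3) unfolding p_adjacent_pairs_def by simp
  qed
  then show "(a, b, c) \<in> E2 n E s"
    using assms(2) abc adj unfolding E2_def s p_adjacent_pairs_def by simp
qed

lemma finite_E1: "finite (E1 n E s)"
  by (rule finite_subset[of _ "{1..n} \<times> {1..n}"]) (auto simp: E1_def split: prod.splits)

lemma finite_E2: "finite (E2 n E s)"
  by (rule finite_subset[of _ "{1..n} \<times> {1..n} \<times> {1..n}"]) (auto simp: E2_def split: prod.splits)

lemma card_argmin_of_least:
  assumes "x \<in> S" "\<And>y. y \<in> S \<Longrightarrow> f x \<subseteq> f y" "\<And>y. finite (f y)"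
  shows "x \<in> {y \<in> S. \<forall>z\<in>S. card (f y) \<le> card (f z)}"
    and "\<And>y. y \<in> {y \<in> S. \<forall>z\<in>S. card (f y) \<le> card (f z)} \<Longrightarrow> f y = f x"
proof -
  show "x \<in> {y \<in> S. \<forall>z\<in>S. card (f y) \<le> card (f z)}"
    using assms(1) card_mono[OF assms(3) assms(2)] by blast
  fix y assume "y \<in> {y \<in> S. \<forall>z\<in>S. card (f y) \<le> card (f z)}"
  then have "card (f y) \<le> card (f x)" "y \<in> S" using assms(1) by auto
  then show "f y = f x" using card_seteq[OF assms(3) assms(2)] by metis
qed

theorem proposition3p9:
  fixes n :: nat and E :: "(nat \<times> nat) set"
  assumes "1 \<le> n"
    and "E \<subseteq> {1..n} \<times> {1..n}"
    and "\<forall>a. (a, a) \<notin> E"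
  shows "assoc_pop n E \<in> S2 n E \<and> (\<forall>s \<in> S2 n E. E2 n E s = unshielded_conductors n E)"
proof -
  have "E1 n E (assoc_pop n E) \<subseteq> E1 n E s" for s
    using p_adjacent_pairs_subset_E1 unfolding E1_assoc_pop[OF assms(2)] .
  from card_argmin_of_least[of "assoc_pop n E" "POP n" "E1 n E", OF assoc_pop_in_POP this finite_E1]
  have S1: "assoc_pop n E \<in> S1 n E" "\<And>s. s \<in> S1 n E \<Longrightarrow> E1 n E s = p_adjacent_pairs n E"
    unfolding S1_def E1_assoc_pop[OF assms(2)] by blast+
  have "E2 n E (assoc_pop n E) \<subseteq> E2 n E s" if "s \<in> S1 n E" for s
    using unshielded_conductors_subset_E2 S1(2)[OF that] that
    unfolding S1_def E2_assoc_pop[OF assms(2)] by blast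
  from card_argmin_of_least[of "assoc_pop n E" "S1 n E" "E2 n E", OF S1(1) this finite_E2]
  show ?thesis unfolding S2_def E2_assoc_pop[OF assms(2)] by blast
qed

end
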